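(* Let $T$ be a tree of maximum degree at most $3$ and let $S$ be a set of endvertices (vertices of degree at most $1$) of $T$ such that $S$ is not an exponential dominating set of $T$, but $S$ is a subset of some minimum exponential dominating set of $T$. Root $T$ at a vertex $r\in V(T)\setminus S$. For every vertex $u$ of $T$, let $T_u$ be the subtree consisting of $u$ and all its descendants, and define $$\partial w(u)=\max\left\{2^{{\rm dist}_T(u,v)}\left(1-w_{(T_u,S\cap V(T_u))}(v)\right):v\in V(T_u)\right\}.$$ (i) If $u\neq r$ is a vertex with $\partial w(u)>1$ and $\partial w(v)\leq 1$ for every descendant $v$ of $u$, then $S\cup\{u\}$ is a subset of some minimum exponential dominating set of $T$. (ii) If $\partial w(u)\leq 1$ for every vertex $u$ of $T$, then $S\cup\{r\}$ is a minimum exponential dominating set of $T$.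
   Context: ${\rm dist}_T(u,v)$ is the usual distance in $T$. For a graph $G$, a set $S\subseteq V(G)$, and vertices $u,v$ with $u\in S$ or $v\in S$, ${\rm dist}_{(G,S)}(u,v)$ is the minimum number of edges of a path $P$ in $G$ between $u$ and $v$ such that $S$ contains exactly one endvertex of $P$ and no internal vertex of $P$, and $\infty$ if no such path exists (so ${\rm dist}_{(G,S)}(u,u)=0$ for $u\in S$). For $u\in V(G)$, $w_{(G,S)}(u)=\sum_{v\in S}(1/2)^{{\rm dist}_{(G,S)}(u,v)-1}$ with $(1/2)^{\infty}=0$. $S$ is an exponential dominating set of $G$ if $w_{(G,S)}(u)\geq 1$ for every $u\in V(G)$, and $\gamma_e(G)$ is the minimum cardinality of an exponential dominating set of $G$; an exponential dominating set of cardinality $\gamma_e(G)$ is called minimum. *)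

theory Defs
  imports Complex_Main "HOL-Library.Extended_Nat"
begin

definition graph :: "'a set \<Rightarrow> ('a \<Rightarrow> 'a \<Rightarrow> bool) \<Rightarrow> bool" where
  "graph V E \<longleftrightarrow> finite V \<and> (\<forall>x y. E x y \<longrightarrow> x \<in> V \<and> y \<in> V \<and> x \<noteq> y \<and> E y x)"

definition is_path :: "'a set \<Rightarrow> ('a \<Rightarrow> 'a \<Rightarrow> bool) \<Rightarrow> 'a list \<Rightarrow> bool" where
  "is_path V E xs \<longleftrightarrow> xs \<noteq> [] \<and> distinct xs \<and> set xs \<subseteq> V \<and>
     (\<forall>i. Suc i < length xs \<longrightarrow> E (xs ! i) (xs ! Suc i))"

definition connected_graph :: "'a set \<Rightarrow> ('a \<Rightarrow> 'a \<Rightarrow> bool) \<Rightarrow> bool" where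
  "connected_graph V E \<longleftrightarrow> V \<noteq> {} \<and>
     (\<forall>u\<in>V. \<forall>v\<in>V. \<exists>xs. is_path V E xs \<and> hd xs = u \<and> last xs = v)"

definition is_cycle :: "'a set \<Rightarrow> ('a \<Rightarrow> 'a \<Rightarrow> bool) \<Rightarrow> 'a list \<Rightarrow> bool" where
  "is_cycle V E xs \<longleftrightarrow> is_path V E xs \<and> length xs \<ge> 3 \<and> E (last xs) (hd xs)"

definition tree :: "'a set \<Rightarrow> ('a \<Rightarrow> 'a \<Rightarrow> bool) \<Rightarrow> bool" where
  "tree V E \<longleftrightarrow> graph V E \<and> connected_graph V E \<and> (\<nexists>xs. is_cycle V E xs)"

definition degree :: "'a set \<Rightarrow> ('a \<Rightarrow> 'a \<Rightarrow> bool) \<Rightarrow> 'a \<Rightarrow> nat" where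
  "degree V E u = card {v\<in>V. E u v}"

definition gdist :: "'a set \<Rightarrow> ('a \<Rightarrow> 'a \<Rightarrow> bool) \<Rightarrow> 'a \<Rightarrow> 'a \<Rightarrow> enat" where
  "gdist V E u v = (INF xs \<in> {xs. is_path V E xs \<and> hd xs = u \<and> last xs = v}. enat (length xs - 1))"

definition sdist :: "'a set \<Rightarrow> ('a \<Rightarrow> 'a \<Rightarrow> bool) \<Rightarrow> 'a set \<Rightarrow> 'a \<Rightarrow> 'a \<Rightarrow> enat" where
  "sdist V E S u v = (INF xs \<in> {xs. is_path V E xs \<and> hd xs = u \<and> last xs = v \<and>
      card ({hd xs, last xs} \<inter> S) = 1 \<and> set (butlast (tl xs)) \<inter> S = {}}. enat (length xs - 1))"

definition half_pow :: "enat \<Rightarrow> real" where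
  "half_pow d = (case d of enat n \<Rightarrow> (1/2) powi (int n - 1) | \<infinity> \<Rightarrow> 0)"

definition weight :: "'a set \<Rightarrow> ('a \<Rightarrow> 'a \<Rightarrow> bool) \<Rightarrow> 'a set \<Rightarrow> 'a \<Rightarrow> real" where
  "weight V E S u = (\<Sum>v\<in>S. half_pow (sdist V E S u v))"

definition exp_dom :: "'a set \<Rightarrow> ('a \<Rightarrow> 'a \<Rightarrow> bool) \<Rightarrow> 'a set \<Rightarrow> bool" where
  "exp_dom V E S \<longleftrightarrow> S \<subseteq> V \<and> (\<forall>u\<in>V. weight V E S u \<ge> 1)"

definition min_exp_dom :: "'a set \<Rightarrow> ('a \<Rightarrow> 'a \<Rightarrow> bool) \<Rightarrow> 'a set \<Rightarrow> bool" where
  "min_exp_dom V E S \<longleftrightarrow> exp_dom V E S \<and> (\<forall>S'. exp_dom V E S' \<longrightarrow> card S \<le> card S')"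

definition descendants :: "'a set \<Rightarrow> ('a \<Rightarrow> 'a \<Rightarrow> bool) \<Rightarrow> 'a \<Rightarrow> 'a \<Rightarrow> 'a set" where
  "descendants V E r u = {v\<in>V. v \<noteq> u \<and>
     (\<exists>xs. is_path V E xs \<and> hd xs = r \<and> last xs = v \<and> u \<in> set xs)}"

definition subtree_verts :: "'a set \<Rightarrow> ('a \<Rightarrow> 'a \<Rightarrow> bool) \<Rightarrow> 'a \<Rightarrow> 'a \<Rightarrow> 'a set" where
  "subtree_verts V E r u = insert u (descendants V E r u)"

definition restrict_edges :: "('a \<Rightarrow> 'a \<Rightarrow> bool) \<Rightarrow> 'a set \<Rightarrow> 'a \<Rightarrow> 'a \<Rightarrow> bool" where
  "restrict_edges E W x y \<longleftrightarrow> E x y \<and> x \<in> W \<and> y \<in> W"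

definition dw :: "'a set \<Rightarrow> ('a \<Rightarrow> 'a \<Rightarrow> bool) \<Rightarrow> 'a set \<Rightarrow> 'a \<Rightarrow> 'a \<Rightarrow> real" where
  "dw V E S r u = (let W = subtree_verts V E r u in
     Max ((\<lambda>v. 2 ^ the_enat (gdist V E u v) *
        (1 - weight W (restrict_edges E W) (S \<inter> W) v)) ` W))"

end

theory Submission
  imports Defs "HOL-Library.Sublist"
begin

text \<open>
  Write \<open>T\<^sub>u\<close> for the subtree of \<open>u\<close>. Everything rests on a Kraft inequality: in a graph
  of maximum degree 3, paths that leave a vertex through a common edge and of which none is a
  prefix of another have \<open>\<Sum> 2 ^ - length \<le> 1\<close>; the tails of shortest admissible paths
  crossing the edge between \<open>u\<close> and its parent form such a family.

  (ii) For \<open>x \<notin> S \<union> {r}\<close> let \<open>c\<close> be the neighbour of \<open>r\<close> towards \<open>x\<close>. Then \<open>r\<close> contributes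
  \<open>2 ^ - dist(c, x)\<close> to the weight of \<open>x\<close>, and \<open>\<partial>w(c) \<le> 1\<close> says that \<open>S \<inter> T\<^sub>c\<close>
  contributes the rest. Since \<open>S\<close> is a proper subset of a minimum exponential dominating
  set, \<open>S \<union> {r}\<close> is no larger than one.

  (i) Let \<open>D \<supseteq> S\<close> be minimum. Seen from a vertex \<open>v \<in> T\<^sub>u\<close>, all of \<open>D - T\<^sub>u\<close> weighs at
  most \<open>2 ^ - dist(u, v)\<close> by the Kraft inequality, so \<open>\<partial>w(u) > 1\<close> forces a vertex of
  \<open>D \<inter> T\<^sub>u\<close> outside \<open>S\<close>. Hence \<open>(D - T\<^sub>u) \<union> (S \<inter> T\<^sub>u) \<union> {u}\<close> is no larger than \<open>D\<close>, and it
  still dominates: outside \<open>T\<^sub>u\<close> the single vertex \<open>u\<close> outweighs all of \<open>D \<inter> T\<^sub>u\<close>, again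
  by the Kraft inequality, and inside \<open>T\<^sub>u\<close> the argument of (ii) applies to the children
  of \<open>u\<close>, whose values of \<open>\<partial>w\<close> are at most 1.
\<close>

lemma half_pow_enat: "half_pow (enat n) = 2 / 2 ^ n"
proof (cases n)
  case (Suc m)
  then have "int n - 1 = int m" by simp
  then show ?thesis using Suc by (simp add: half_pow_def power_divide)
qed (simp add: half_pow_def)

lemma half_pow_infinity [simp]: "half_pow \<infinity> = 0"
  by (simp add: half_pow_def)

lemma half_pow_nonneg: "half_pow d \<ge> 0"
  by (cases d) (simp_all add: half_pow_enat)

lemma half_pow_antimono: "a \<le> b \<Longrightarrow> half_pow b \<le> half_pow a"
proof (cases b)
  case (enat m)
  assume "a \<le> b"
  with enat obtain n where "a = enat n" "n \<le> m" by (cases a) auto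
  with enat show ?thesis by (auto simp: half_pow_enat intro!: divide_left_mono power_increasing)
qed (simp add: half_pow_nonneg)

lemma half_pow_enat_add: "half_pow (enat (a + b)) = 2 * (1/2) ^ a * (1/2) ^ b"
  by (simp add: half_pow_enat power_add power_one_over)

lemma is_path_edge: "is_path V E xs \<Longrightarrow> Suc i < length xs \<Longrightarrow> E (xs!i) (xs!Suc i)"
  by (simp add: is_path_def)

lemma is_path_nth_in: "is_path V E xs \<Longrightarrow> i < length xs \<Longrightarrow> xs!i \<in> V"
  unfolding is_path_def by (meson nth_mem subsetD)

lemma is_path_take: "is_path V E xs \<Longrightarrow> 0 < n \<Longrightarrow> is_path V E (take n xs)"
  unfolding is_path_def by (auto dest: in_set_takeD)

lemma is_path_drop: "is_path V E xs \<Longrightarrow> n < length xs \<Longrightarrow> is_path V E (drop n xs)"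
  unfolding is_path_def by (auto dest: in_set_dropD)

lemma is_path_append:
  assumes "is_path V E xs" "is_path V E ys" "set xs \<inter> set ys = {}" "E (last xs) (hd ys)"
  shows "is_path V E (xs @ ys)"
  unfolding is_path_def
proof (intro conjI allI impI)
  show "xs @ ys \<noteq> []" "distinct (xs @ ys)" "set (xs @ ys) \<subseteq> V"
    using assms by (auto simp: is_path_def)
  fix i assume i: "Suc i < length (xs @ ys)"
  have ne: "xs \<noteq> []" "ys \<noteq> []" using assms by (auto simp: is_path_def)
  consider "Suc i < length xs" | "Suc i = length xs" | "Suc i > length xs" by linarith
  then show "E ((xs @ ys) ! i) ((xs @ ys) ! Suc i)"
  proof cases
    case 1
    then show ?thesis using assms(1) by (simp add: nth_append is_path_def)
  next
    case 2
    then have "i = length xs - 1" by simp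
    then show ?thesis using 2 ne assms(4) by (simp add: nth_append last_conv_nth hd_conv_nth)
  next
    case 3
    then have "(xs @ ys) ! i = ys ! (i - length xs)" "(xs @ ys) ! Suc i = ys ! Suc (i - length xs)"
      by (auto simp: nth_append Suc_diff_le)
    then show ?thesis using assms(2) i 3 unfolding is_path_def by auto
  qed
qed

lemma is_path_snoc:
  "is_path V E xs \<Longrightarrow> b \<in> V \<Longrightarrow> b \<notin> set xs \<Longrightarrow> E (last xs) b \<Longrightarrow> is_path V E (xs @ [b])"
  by (rule is_path_append) (auto simp: is_path_def)

lemma graph_edge_sym: "graph V E \<Longrightarrow> E a b \<Longrightarrow> E b a"
  unfolding graph_def by auto

lemma graph_edge_in: "graph V E \<Longrightarrow> E a b \<Longrightarrow> a \<in> V \<and> b \<in> V"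
  unfolding graph_def by auto

lemma is_path_rev: "graph V E \<Longrightarrow> is_path V E xs \<Longrightarrow> is_path V E (rev xs)"
  unfolding is_path_def graph_def
  by (auto simp: rev_nth) (metis Suc_diff_Suc Suc_lessD diff_Suc_less length_greater_0_conv zero_less_diff)

lemma is_path_restrict: "is_path V E xs \<Longrightarrow> set xs \<subseteq> W \<Longrightarrow> is_path W (restrict_edges E W) xs"
  unfolding is_path_def restrict_edges_def by auto

lemma is_path_unrestrict: "W \<subseteq> V \<Longrightarrow> is_path W (restrict_edges E W) xs \<Longrightarrow> is_path V E xs"
  unfolding is_path_def restrict_edges_def by auto

lemma is_path_length_le_card: "is_path V E xs \<Longrightarrow> finite V \<Longrightarrow> length xs \<le> card V"
  unfolding is_path_def by (metis card_mono distinct_card)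

lemma distinct_hd_eq_last: "distinct xs \<Longrightarrow> xs \<noteq> [] \<Longrightarrow> hd xs = last xs \<Longrightarrow> xs = [hd xs]"
  by (cases xs) (auto, metis last_in_set)

lemma distinct_nth_eq_last: "distinct xs \<Longrightarrow> j < length xs \<Longrightarrow> xs!j = last xs \<Longrightarrow> j = length xs - 1"
  by (cases "xs = []") (auto simp: last_conv_nth nth_eq_iff_index_eq)

lemma is_path_length_ge_2: "is_path V E xs \<Longrightarrow> hd xs \<noteq> last xs \<Longrightarrow> 2 \<le> length xs"
  by (cases xs) (auto simp: is_path_def Suc_le_eq)

lemma nth_in_interior: "0 < j \<Longrightarrow> Suc j < length xs \<Longrightarrow> xs!j \<in> set (butlast (tl xs))"
proof -
  assume j: "0 < j" "Suc j < length xs"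
  then have "butlast (tl xs) ! (j - 1) = xs ! j" by (simp add: nth_butlast nth_tl)
  moreover have "j - 1 < length (butlast (tl xs))" using j by simp
  ultimately show ?thesis by (metis nth_mem)
qed

lemma interior_nth: "x \<in> set (butlast (tl xs)) \<Longrightarrow> \<exists>j. 0 < j \<and> Suc j < length xs \<and> xs!j = x"
proof -
  assume "x \<in> set (butlast (tl xs))"
  then obtain k where "k < length (butlast (tl xs))" "butlast (tl xs) ! k = x"
    by (auto simp: in_set_conv_nth)
  then show ?thesis by (intro exI[of _ "Suc k"]) (auto simp: nth_butlast nth_tl)
qed

lemma interior_rev: "set (butlast (tl (rev xs))) = set (butlast (tl xs))"
proof (cases xs rule: rev_cases)
  case (snoc ys z)
  then show ?thesis by (cases ys) (auto simp: butlast_rev)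
qed simp

lemma interior_subset: "set (butlast (tl xs)) \<subseteq> set xs"
  by (cases xs) (auto dest: in_set_butlastD)

lemma interior_hd_notin: "distinct xs \<Longrightarrow> hd xs \<notin> set (butlast (tl xs))"
  by (cases xs) (auto dest: in_set_butlastD)

lemma last_prefix_in_interior:
  assumes "prefix A (drop i P)" "A \<noteq> []" "last A \<noteq> last P" "0 < i"
  shows "last A \<in> set (butlast (tl P))"
proof -
  obtain zs where zs: "drop i P = A @ zs" using assms(1) by (auto simp: prefix_def)
  have "zs \<noteq> []" using zs assms(2,3) by (metis append.right_neutral append_take_drop_id last_appendR)
  moreover have "take i P \<noteq> []" using assms(4) zs assms(2) by auto
  moreover have "P = take i P @ A @ zs" using zs by (metis append_take_drop_id)
  ultimately have "butlast (tl P) = tl (take i P) @ A @ butlast zs"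
    by (metis butlast_append tl_append2 append_is_Nil_conv)
  then show ?thesis using assms(2) by simp
qed

lemma ex_crossing_index:
  fixes Q :: "nat \<Rightarrow> bool"
  assumes "Q i" "\<not> Q k" "i \<le> k"
  shows "\<exists>m. i \<le> m \<and> m < k \<and> Q m \<and> \<not> Q (Suc m)"
  using assms
proof (induction k)
  case (Suc k)
  then show ?case by (cases "Q k") (auto simp: le_Suc_eq intro: less_SucI)
qed simp

subsection \<open>Admissible paths for the distance relative to a set\<close>

definition sdist_path :: "'a set \<Rightarrow> ('a \<Rightarrow> 'a \<Rightarrow> bool) \<Rightarrow> 'a set \<Rightarrow> 'a \<Rightarrow> 'a \<Rightarrow> 'a list \<Rightarrow> bool"
  where "sdist_path V E S u v xs \<longleftrightarrow> is_path V E xs \<and> hd xs = u \<and> last xs = v \<and>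
    card ({hd xs, last xs} \<inter> S) = 1 \<and> set (butlast (tl xs)) \<inter> S = {}"

lemma sdist_eq_INF: "sdist V E S u v = (INF xs\<in>{xs. sdist_path V E S u v xs}. enat (length xs - 1))"
  by (simp add: sdist_def sdist_path_def)

lemma sdist_le_length: "sdist_path V E S u v xs \<Longrightarrow> sdist V E S u v \<le> enat (length xs - 1)"
  unfolding sdist_eq_INF by (rule INF_lower2[of xs]) auto

lemma gdist_le_length:
  "is_path V E xs \<Longrightarrow> hd xs = u \<Longrightarrow> last xs = v \<Longrightarrow> gdist V E u v \<le> enat (length xs - 1)"
  unfolding gdist_def by (rule INF_lower2[of xs]) auto

lemma INF_length_attained:
  fixes P :: "'b list set"
  assumes "xs \<in> P"
  obtains ys where "ys \<in> P" "(INF zs\<in>P. enat (length zs - 1)) = enat (length ys - 1)"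
    "\<And>zs. zs \<in> P \<Longrightarrow> length ys \<le> length zs"
proof -
  obtain ys where ys: "ys \<in> P" and least: "\<And>zs. zs \<in> P \<Longrightarrow> length ys \<le> length zs"
    using ex_has_least_nat[of "\<lambda>zs. zs \<in> P" xs length] assms by blast
  have "(INF zs\<in>P. enat (length zs - 1)) = enat (length ys - 1)"
  proof (rule antisym)
    show "(INF zs\<in>P. enat (length zs - 1)) \<le> enat (length ys - 1)"
      by (rule INF_lower2[OF ys]) simp
    show "enat (length ys - 1) \<le> (INF zs\<in>P. enat (length zs - 1))"
      by (rule INF_greatest) (simp add: least diff_le_mono)
  qed
  with ys least show thesis using that by blast
qed

lemma sdist_attained:
  assumes "sdist V E S u v = enat n"
  obtains xs where "sdist_path V E S u v xs" "length xs = Suc n"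
proof -
  have "{xs. sdist_path V E S u v xs} \<noteq> {}"
    using assms unfolding sdist_eq_INF by (metis INF_empty top_enat_def enat.distinct(2))
  then obtain xs where "sdist_path V E S u v xs" by auto
  then obtain ys where "sdist_path V E S u v ys" "sdist V E S u v = enat (length ys - 1)"
    using INF_length_attained[of xs "{xs. sdist_path V E S u v xs}"] unfolding sdist_eq_INF by auto
  moreover from this have "ys \<noteq> []" by (simp add: sdist_path_def is_path_def)
  ultimately show thesis using assms that[of ys] by auto
qed

lemma shortest_sdist_paths:
  assumes "\<forall>s\<in>X. sdist V E S v s \<noteq> \<infinity>"
  obtains P where "\<And>s. s \<in> X \<Longrightarrow> sdist_path V E S v s (P s)"
    "\<And>s. s \<in> X \<Longrightarrow> sdist V E S v s = enat (length (P s) - 1)"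
proof -
  have "\<forall>s\<in>X. \<exists>xs. sdist_path V E S v s xs \<and> sdist V E S v s = enat (length xs - 1)"
  proof
    fix s assume "s \<in> X"
    with assms obtain n where n: "sdist V E S v s = enat n" by auto
    then obtain xs where "sdist_path V E S v s xs" "length xs = Suc n" by (rule sdist_attained)
    with n show "\<exists>xs. sdist_path V E S v s xs \<and> sdist V E S v s = enat (length xs - 1)" by auto
  qed
  then show thesis using that by metis
qed

lemma sum_half_pow_sdist_finite:
  assumes "finite A"
  shows "(\<Sum>s\<in>A. half_pow (sdist V E S v s)) =
    (\<Sum>s\<in>{s\<in>A. sdist V E S v s \<noteq> \<infinity>}. half_pow (sdist V E S v s))"
  by (rule sum.mono_neutral_right) (use assms in auto)

lemma weight_ge_2_in_set:
  assumes "finite S" "x \<in> S" "x \<in> V"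
  shows "weight V E S x \<ge> 2"
proof -
  have "sdist_path V E S x x [x]" using assms by (simp add: sdist_path_def is_path_def)
  then have "half_pow (sdist V E S x x) = 2"
    using sdist_le_length[of V E S x x "[x]"]
    by (simp add: zero_enat_def[symmetric]) (simp add: zero_enat_def half_pow_enat)
  moreover have "half_pow (sdist V E S x x) \<le> weight V E S x"
    unfolding weight_def by (rule member_le_sum) (use assms half_pow_nonneg in auto)
  ultimately show ?thesis by simp
qed

lemma sdist_le_sdist_restrict:
  assumes "W \<subseteq> V" "D \<inter> W = S \<inter> W"
  shows "sdist V E D x s \<le> sdist W (restrict_edges E W) (S \<inter> W) x s"
  unfolding sdist_eq_INF
proof (rule INF_superset_mono)
  show "{xs. sdist_path W (restrict_edges E W) (S \<inter> W) x s xs} \<subseteq> {xs. sdist_path V E D x s xs}"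
  proof
    fix xs assume "xs \<in> {xs. sdist_path W (restrict_edges E W) (S \<inter> W) x s xs}"
    then have v: "sdist_path W (restrict_edges E W) (S \<inter> W) x s xs" by simp
    then have p: "is_path W (restrict_edges E W) xs" by (simp add: sdist_path_def)
    then have "set xs \<subseteq> W" "xs \<noteq> []" by (auto simp: is_path_def)
    then have "{hd xs, last xs} \<subseteq> W" "set (butlast (tl xs)) \<subseteq> W"
      using interior_subset[of xs] by auto
    then have "{hd xs, last xs} \<inter> D = {hd xs, last xs} \<inter> (S \<inter> W)"
      "set (butlast (tl xs)) \<inter> D = set (butlast (tl xs)) \<inter> (S \<inter> W)"
      using assms(2) by auto
    with v is_path_unrestrict[OF assms(1) p] show "xs \<in> {xs. sdist_path V E D x s xs}"
      unfolding sdist_path_def by auto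
  qed
qed simp

lemma shortest_path_exists:
  assumes "is_path V E xs" "hd xs = a" "last xs = b"
  obtains zs where "is_path V E zs" "hd zs = a" "last zs = b"
    "\<And>ys. is_path V E ys \<Longrightarrow> hd ys = a \<Longrightarrow> last ys = b \<Longrightarrow> length zs \<le> length ys"
proof -
  let ?P = "{ys. is_path V E ys \<and> hd ys = a \<and> last ys = b}"
  obtain zs where "zs \<in> ?P" "\<And>ys. ys \<in> ?P \<Longrightarrow> length zs \<le> length ys"
    by (rule INF_length_attained[of xs ?P]) (use assms in auto)
  then show thesis using that by auto
qed

lemma tree_no_chord:
  assumes "tree V E" "is_path V E xs" "i + 2 \<le> j" "j < length xs"
  shows "\<not> E (xs!j) (xs!i)"
proof
  assume e: "E (xs!j) (xs!i)"
  define ys where "ys = drop i (take (Suc j) xs)"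
  have "is_path V E ys"
    unfolding ys_def using assms by (intro is_path_drop is_path_take) auto
  moreover have "length ys = Suc j - i" "hd ys = xs!i" "last ys = xs!j"
    using assms(3,4) unfolding ys_def by (auto simp: hd_drop_conv_nth last_conv_nth)
  ultimately have "is_cycle V E ys" using assms(3) e unfolding is_cycle_def by auto
  then show False using assms(1) unfolding tree_def by auto
qed

lemma degree_ge_2_interior:
  assumes G: "graph V E" and p: "is_path V E xs" and j: "0 < j" "Suc j < length xs"
  shows "degree V E (xs!j) \<ge> 2"
proof -
  have "distinct xs" using p by (simp add: is_path_def)
  then have "xs!(j-1) \<noteq> xs!Suc j" using j nth_eq_iff_index_eq by fastforce
  moreover have "E (xs!j) (xs!(j-1))" using is_path_edge[OF p, of "j-1"] j graph_edge_sym[OF G] by simp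
  moreover have "E (xs!j) (xs!Suc j)" using is_path_edge[OF p, of j] j by simp
  ultimately have "{xs!(j-1), xs!Suc j} \<subseteq> {v\<in>V. E (xs!j) v}" "card {xs!(j-1), xs!Suc j} = 2"
    using graph_edge_in[OF G] by auto
  moreover have "finite V" using G by (simp add: graph_def)
  ultimately show ?thesis unfolding degree_def
    by (metis (no_types, lifting) card_mono finite_subset mem_Collect_eq subsetI)
qed

lemma leaves_not_interior:
  assumes "graph V E" "is_path V E xs" "S \<subseteq> {u\<in>V. degree V E u \<le> 1}"
  shows "set (butlast (tl xs)) \<inter> S = {}"
proof (rule ccontr)
  assume "set (butlast (tl xs)) \<inter> S \<noteq> {}"
  then obtain x where x: "x \<in> set (butlast (tl xs))" "x \<in> S" by auto
  then obtain j where "0 < j" "Suc j < length xs" "xs!j = x" using interior_nth by metis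
  with degree_ge_2_interior[OF assms(1,2)] have "degree V E x \<ge> 2" by auto
  with x assms(3) show False by auto
qed

lemma gdist_second_vertex:
  assumes G: "graph V E" and p: "is_path V E zs" "hd zs = y" "last zs = x"
    and shortest: "\<And>ys. is_path V E ys \<Longrightarrow> hd ys = y \<Longrightarrow> last ys = x \<Longrightarrow> length zs \<le> length ys"
    and n: "2 \<le> length zs"
  shows "gdist V E (zs!1) x = enat (length zs - 2)"
proof (rule antisym)
  have "gdist V E (zs!1) x \<le> enat (length (drop 1 zs) - 1)"
    by (rule gdist_le_length) (use p n in \<open>auto intro: is_path_drop simp: hd_drop_conv_nth\<close>)
  then show "gdist V E (zs!1) x \<le> enat (length zs - 2)" by (simp add: numeral_2_eq_2)
next
  have z0: "zs!0 = y" using p n by (cases zs) auto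
  have e: "E y (zs!1)" using is_path_edge[OF p(1), of 0] n z0 by simp
  have dz: "zs!1 \<noteq> y"
    using p(1) n z0 nth_eq_iff_index_eq[of zs 1 0] by (auto simp: is_path_def)
  show "enat (length zs - 2) \<le> gdist V E (zs!1) x"
    unfolding gdist_def
  proof (rule INF_greatest)
    fix qs assume "qs \<in> {xs. is_path V E xs \<and> hd xs = zs ! 1 \<and> last xs = x}"
    then have q: "is_path V E qs" "hd qs = zs!1" "last qs = x" by auto
    have qne: "qs \<noteq> []" using q by (auto simp: is_path_def)
    show "enat (length zs - 2) \<le> enat (length qs - 1)"
    proof (cases "y \<in> set qs")
      case False
      have "is_path V E ([y] @ qs)"
        by (rule is_path_append) (use q False e graph_edge_in[OF G e] in \<open>auto simp: is_path_def\<close>)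
      then have "length zs \<le> length ([y] @ qs)" by (rule shortest) (use q qne in auto)
      then show ?thesis by simp
    next
      case True
      then obtain j where j: "j < length qs" "qs!j = y" by (auto simp: in_set_conv_nth)
      have "j \<noteq> 0" using j q(2) dz qne by (metis hd_conv_nth)
      have "length zs \<le> length (drop j qs)"
        by (rule shortest) (use is_path_drop[OF q(1) j(1)] j q in \<open>auto simp: hd_drop_conv_nth\<close>)
      then show ?thesis using \<open>j \<noteq> 0\<close> by simp
    qed
  qed
qed

subsection \<open>A Kraft inequality for paths in graphs of maximum degree three\<close>

text \<open>Prolonging a path through a vertex of degree at most 3 offers at most two ways on, so
  prefix-free families of such prolongations have Kraft sum at most 1.\<close>

lemma sum_Cons_image_half_power:
  assumes "\<And>R. R \<in> T \<Longrightarrow> R \<noteq> []"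
  shows "(\<Sum>Q\<in>(#) a ` T. (1/2::real) ^ (length Q - 1)) = (1/2) * (\<Sum>R\<in>T. (1/2) ^ (length R - 1))"
proof -
  have "(\<Sum>Q\<in>(#) a ` T. (1/2::real) ^ (length Q - 1)) = (\<Sum>R\<in>T. (1/2) ^ length R)"
    by (simp add: sum.reindex)
  also have "\<dots> = (\<Sum>R\<in>T. (1/2) * (1/2) ^ (length R - 1))"
  proof (rule sum.cong[OF refl])
    fix R assume "R \<in> T"
    then obtain k where "length R = Suc k" using assms by (cases R) auto
    then show "(1/2::real) ^ length R = (1/2) * (1/2) ^ (length R - 1)" by simp
  qed
  finally show ?thesis by (simp add: sum_distrib_left)
qed

lemma prolongations_split:
  assumes G: "graph V E" and F: "\<And>Q. Q \<in> F \<Longrightarrow> Q \<noteq> [] \<and> hd Q = a \<and> is_path V E (b # Q)"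
    and single: "[a] \<notin> F"
  shows "F = (\<Union>c\<in>{c\<in>V. E a c} - {b}. (#) a ` {R. a # R \<in> F \<and> R \<noteq> [] \<and> hd R = c})"
proof
  show "F \<subseteq> (\<Union>c\<in>{c\<in>V. E a c} - {b}. (#) a ` {R. a # R \<in> F \<and> R \<noteq> [] \<and> hd R = c})"
  proof
    fix Q assume Q: "Q \<in> F"
    define R where "R = tl Q"
    have QR: "Q = a # R" using F[OF Q] R_def by (cases Q) auto
    have "R \<noteq> []" using Q QR single by auto
    have p: "is_path V E (b # a # R)" using F[OF Q] QR by simp
    then have "E a (hd R)" using is_path_edge[OF p, of 1] \<open>R \<noteq> []\<close> by (cases R) auto
    moreover have "hd R \<noteq> b" using p \<open>R \<noteq> []\<close> by (auto simp: is_path_def)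
    ultimately show "Q \<in> (\<Union>c\<in>{c\<in>V. E a c} - {b}. (#) a ` {R. a # R \<in> F \<and> R \<noteq> [] \<and> hd R = c})"
      using Q QR \<open>R \<noteq> []\<close> graph_edge_in[OF G] by auto
  qed
qed auto

lemma kraft_bounded:
  assumes G: "graph V E" and deg: "\<forall>a\<in>V. degree V E a \<le> 3"
  shows "E b a \<Longrightarrow> finite F \<Longrightarrow>
    (\<And>Q. Q \<in> F \<Longrightarrow> Q \<noteq> [] \<and> hd Q = a \<and> is_path V E (b # Q) \<and> length Q \<le> n) \<Longrightarrow>
    (\<And>Q Q'. Q \<in> F \<Longrightarrow> Q' \<in> F \<Longrightarrow> prefix Q Q' \<Longrightarrow> Q = Q') \<Longrightarrow>
    (\<Sum>Q\<in>F. (1/2::real) ^ (length Q - 1)) \<le> 1"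
proof (induction n arbitrary: a b F)
  case 0
  then have "F = {}" by fastforce
  then show ?case by simp
next
  case (Suc n)
  show ?case
  proof (cases "[a] \<in> F")
    case True
    have "[a] = Q" if "Q \<in> F" for Q
    proof (rule Suc.prems(4)[OF True that])
      have "Q = a # tl Q" using Suc.prems(3)[OF that] by (cases Q) auto
      then show "prefix [a] Q" by (metis Cons_prefix_Cons Nil_prefix)
    qed
    then have "F = {[a]}" using True by blast
    then show ?thesis by simp
  next
    case False
    define C where "C = {c\<in>V. E a c} - {b}"
    define tails where "tails c = {R. a # R \<in> F \<and> R \<noteq> [] \<and> hd R = c}" for c
    have finC: "finite C" using G unfolding C_def graph_def by simp
    have cardC: "card C \<le> 2"
    proof -
      have "a \<in> V" "b \<in> {c\<in>V. E a c}"
        using graph_edge_in[OF G Suc.prems(1)] graph_edge_sym[OF G Suc.prems(1)] by auto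
      moreover from this have "card {c\<in>V. E a c} \<le> 3" using deg unfolding degree_def by auto
      ultimately show ?thesis unfolding C_def by (simp add: card_Diff_singleton)
    qed
    have fin_tails: "finite (tails c)" for c
    proof (rule finite_subset)
      show "tails c \<subseteq> tl ` F" by (force simp: tails_def)
    qed (use Suc.prems(2) in simp)
    have tail_bound: "(\<Sum>R\<in>tails c. (1/2::real) ^ (length R - 1)) \<le> 1" if c: "c \<in> C" for c
    proof (rule Suc.IH[OF _ fin_tails])
      show "E a c" using c unfolding C_def by auto
      show "R \<noteq> [] \<and> hd R = c \<and> is_path V E (a # R) \<and> length R \<le> n" if "R \<in> tails c" for R
        using that Suc.prems(3)[of "a # R"] is_path_drop[of V E "b # a # R" 1]
        unfolding tails_def by auto
      show "R = R'" if "R \<in> tails c" "R' \<in> tails c" "prefix R R'" for R R'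
        using that Suc.prems(4)[of "a # R" "a # R'"] unfolding tails_def by auto
    qed
    have F_eq: "F = (\<Union>c\<in>C. (#) a ` tails c)"
      unfolding C_def tails_def by (rule prolongations_split[OF G _ False]) (use Suc.prems(3) in blast)
    have "(\<Sum>Q\<in>F. (1/2::real) ^ (length Q - 1)) = (\<Sum>c\<in>C. \<Sum>Q\<in>(#) a ` tails c. (1/2) ^ (length Q - 1))"
      by (subst F_eq, rule sum.UNION_disjoint)
        (use fin_tails finC in \<open>auto simp: tails_def\<close>)
    also have "\<dots> = (\<Sum>c\<in>C. (1/2) * (\<Sum>R\<in>tails c. (1/2) ^ (length R - 1)))"
      by (rule sum.cong[OF refl], rule sum_Cons_image_half_power) (simp add: tails_def)
    also have "\<dots> \<le> (\<Sum>c\<in>C. 1/2)" by (rule sum_mono) (use tail_bound in auto)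
    also have "\<dots> \<le> 1" using cardC by simp
    finally show ?thesis .
  qed
qed

lemma kraft_prefix_free:
  assumes "graph V E" "\<forall>a\<in>V. degree V E a \<le> 3" "E b a" "finite F"
    "\<And>Q. Q \<in> F \<Longrightarrow> Q \<noteq> [] \<and> hd Q = a \<and> is_path V E (b # Q)"
    "\<And>Q Q'. Q \<in> F \<Longrightarrow> Q' \<in> F \<Longrightarrow> prefix Q Q' \<Longrightarrow> Q = Q'"
  shows "(\<Sum>Q\<in>F. (1/2::real) ^ (length Q - 1)) \<le> 1"
proof (rule kraft_bounded[OF assms(1-4), of "card V"])
  fix Q assume "Q \<in> F"
  moreover have "finite V" using assms(1) by (simp add: graph_def)
  ultimately show "Q \<noteq> [] \<and> hd Q = a \<and> is_path V E (b # Q) \<and> length Q \<le> card V"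
    using assms(5) is_path_length_le_card[of V E "b # Q"] by auto
qed (use assms(6) in blast)

lemma kraft_sdist_path_tails:
  assumes G: "graph V E" and deg: "\<forall>a\<in>V. degree V E a \<le> 3" and fin: "finite X"
    and XD: "X \<subseteq> D" and ba: "E b a"
    and P: "\<And>s. s \<in> X \<Longrightarrow> sdist_path V E D v s (P s)"
    and I: "\<And>s. s \<in> X \<Longrightarrow> 0 < I s \<and> I s < length (P s) \<and> P s ! (I s - 1) = b \<and> P s ! I s = a"
  shows "(\<Sum>s\<in>X. (1/2::real) ^ (length (P s) - Suc (I s))) \<le> 1"
proof -
  define Q where "Q s = drop (I s) (P s)" for s
  have Q: "Q s \<noteq> [] \<and> hd (Q s) = a \<and> is_path V E (b # Q s) \<and> last (Q s) = s" if s: "s \<in> X" for s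
  proof -
    have p: "is_path V E (P s)" "last (P s) = s" using P[OF s] by (auto simp: sdist_path_def)
    have "drop (I s - 1) (P s) = b # Q s"
      using Cons_nth_drop_Suc[of "I s - 1" "P s"] I[OF s] unfolding Q_def by auto
    moreover have "is_path V E (drop (I s - 1) (P s))"
      by (rule is_path_drop[OF p(1)]) (use I[OF s] in auto)
    ultimately show ?thesis using I[OF s] p unfolding Q_def by (auto simp: hd_drop_conv_nth)
  qed
  have prefix_free: "s = t" if s: "s \<in> X" and t: "t \<in> X" and st: "prefix (Q s) (Q t)" for s t
  proof (rule ccontr)
    assume "s \<noteq> t"
    then have "last (Q s) \<in> set (butlast (tl (P t)))"
      using last_prefix_in_interior[of "Q s" "I t" "P t"] st Q[OF s] P[OF t] I[OF t]
      unfolding Q_def by (auto simp: sdist_path_def)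
    then show False using Q[OF s] P[OF t] s XD by (auto simp: sdist_path_def)
  qed
  then have "inj_on Q X" by (intro inj_onI) auto
  then have "(\<Sum>s\<in>X. (1/2::real) ^ (length (P s) - Suc (I s))) = (\<Sum>R\<in>Q ` X. (1/2) ^ (length R - 1))"
    by (simp add: sum.reindex) (simp add: Q_def)
  also have "\<dots> \<le> 1"
    by (rule kraft_prefix_free[OF G deg ba]) (use fin Q prefix_free in auto)
  finally show ?thesis .
qed

subsection \<open>Subtrees of a rooted tree\<close>

locale rooted_tree =
  fixes V :: "'a set" and E :: "'a \<Rightarrow> 'a \<Rightarrow> bool" and r :: 'a
  assumes tree: "tree V E" and root_in: "r \<in> V"
begin

abbreviation subtree :: "'a \<Rightarrow> 'a set" where "subtree u \<equiv> subtree_verts V E r u"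

lemma graph: "graph V E"
  using tree unfolding tree_def by auto

lemma finite_V: "finite V"
  using graph unfolding graph_def by auto

lemma connected: "a \<in> V \<Longrightarrow> b \<in> V \<Longrightarrow> \<exists>xs. is_path V E xs \<and> hd xs = a \<and> last xs = b"
  using tree unfolding tree_def connected_graph_def by auto

lemma subtree_subset: "u \<in> V \<Longrightarrow> subtree u \<subseteq> V"
  unfolding subtree_verts_def descendants_def by auto

lemma self_in_subtree: "u \<in> subtree u"
  unfolding subtree_verts_def by auto

lemma subtree_memD:
  "b \<in> subtree u \<Longrightarrow> b \<noteq> u \<Longrightarrow> \<exists>xs. is_path V E xs \<and> hd xs = r \<and> last xs = b \<and> u \<in> set xs"
  unfolding subtree_verts_def descendants_def by auto

lemma last_in_subtree: "is_path V E xs \<Longrightarrow> hd xs = r \<Longrightarrow> u \<in> set xs \<Longrightarrow> last xs \<in> subtree u"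
  unfolding subtree_verts_def descendants_def is_path_def by auto

lemma subtree_root: "subtree r = V"
proof
  show "V \<subseteq> subtree r"
  proof
    fix v assume "v \<in> V"
    then obtain xs where "is_path V E xs" "hd xs = r" "last xs = v" using connected root_in by blast
    then show "v \<in> subtree r" using last_in_subtree[of xs r] hd_in_set[of xs] by (auto simp: is_path_def)
  qed
qed (rule subtree_subset[OF root_in])

lemma root_notin_subtree: "u \<noteq> r \<Longrightarrow> r \<notin> subtree u"
proof
  assume "u \<noteq> r" "r \<in> subtree u"
  then obtain xs where xs: "is_path V E xs" "hd xs = r" "last xs = r" "u \<in> set xs"
    using subtree_memD by metis
  then have "xs = [r]" using distinct_hd_eq_last[of xs] by (auto simp: is_path_def)
  then show False using xs \<open>u \<noteq> r\<close> by simp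
qed

lemma edge_into_subtree:
  assumes a: "a \<in> V" "a \<notin> subtree u" and b: "b \<in> subtree u" and e: "E a b"
  shows "b = u"
proof (rule ccontr)
  assume bu: "b \<noteq> u"
  then obtain xs where xs: "is_path V E xs" "hd xs = r" "last xs = b" "u \<in> set xs"
    using subtree_memD b by metis
  have au: "a \<noteq> u" using a self_in_subtree by auto
  have ne: "xs \<noteq> []" using xs by (auto simp: is_path_def)
  show False
  proof (cases "a \<in> set xs")
    case False
    have "is_path V E (xs @ [a])"
      by (rule is_path_snoc) (use xs False a graph_edge_sym[OF graph e] in auto)
    then have "last (xs @ [a]) \<in> subtree u" by (rule last_in_subtree) (use xs ne in auto)
    then show False using a by simp
  next
    case True
    obtain i where i: "i < length xs" "xs!i = a" using True by (auto simp: in_set_conv_nth)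
    obtain j where j: "j < length xs" "xs!j = u" using xs(4) by (auto simp: in_set_conv_nth)
    have lastb: "xs!(length xs - 1) = b" using xs(3) ne by (simp add: last_conv_nth)
    show False
    proof (cases "j < i")
      case True
      have "last (take (Suc i) xs) \<in> subtree u"
        by (rule last_in_subtree)
          (use is_path_take[OF xs(1)] xs(2) ne True i j in \<open>auto simp: in_set_conv_nth intro!: exI[of _ j]\<close>)
      moreover have "last (take (Suc i) xs) = a" using i by (simp add: take_Suc_conv_app_nth)
      ultimately show False using a by simp
    next
      case False
      then have "i + 2 \<le> length xs - 1"
        using i j au bu lastb nth_eq_iff_index_eq[of xs j "length xs - 1"] xs(1)
        by (cases "i = j") (auto simp: is_path_def)
      then have "\<not> E (xs!(length xs - 1)) (xs!i)" by (rule tree_no_chord[OF tree xs(1)]) (use ne in simp)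
      then show False using graph_edge_sym[OF graph e] lastb i by simp
    qed
  qed
qed

lemma edge_out_of_subtree: "a \<in> V \<Longrightarrow> a \<notin> subtree u \<Longrightarrow> b \<in> subtree u \<Longrightarrow> E b a \<Longrightarrow> b = u"
  using edge_into_subtree graph_edge_sym[OF graph, of b a] by blast

lemma path_enters_subtree_at_root:
  assumes p: "is_path V E xs" and h: "xs!0 \<notin> subtree u" and k: "k < length xs" "xs!k \<in> subtree u"
  shows "\<exists>j. 0 < j \<and> j \<le> k \<and> xs!j = u \<and> (\<forall>m<j. xs!m \<notin> subtree u)"
proof -
  define j where "j = (LEAST j. xs!j \<in> subtree u)"
  have jk: "xs!j \<in> subtree u" "j \<le> k" using k unfolding j_def by (auto intro: LeastI Least_le)
  have before: "\<forall>m<j. xs!m \<notin> subtree u" using not_less_Least unfolding j_def by blast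
  have j0: "0 < j" using jk h by (cases j) auto
  have "xs!(j-1) \<in> V" "E (xs!(j-1)) (xs!j)"
    using is_path_nth_in[OF p] is_path_edge[OF p, of "j-1"] j0 jk k by auto
  then have "xs!j = u" using edge_into_subtree before j0 jk by simp
  then show ?thesis using jk j0 before by auto
qed

lemma path_leaves_subtree_at_root:
  assumes p: "is_path V E xs" and h: "xs!0 \<in> subtree u" and k: "k < length xs" "xs!k \<notin> subtree u"
  shows "\<exists>j. 0 < j \<and> j \<le> k \<and> xs!(j-1) = u \<and> xs!j \<notin> subtree u \<and> (\<forall>m<j. xs!m \<in> subtree u)"
proof -
  define j where "j = (LEAST j. xs!j \<notin> subtree u)"
  have jk: "xs!j \<notin> subtree u" "j \<le> k"
    unfolding j_def by (rule LeastI[of _ k], use k in simp) (rule Least_le, use k in simp)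
  have before: "\<forall>m<j. xs!m \<in> subtree u" using not_less_Least unfolding j_def by blast
  have j0: "0 < j" using jk h by (cases j) auto
  have "xs!j \<in> V" "E (xs!(j-1)) (xs!j)"
    using is_path_nth_in[OF p] is_path_edge[OF p, of "j-1"] j0 jk k by auto
  then have "xs!(j-1) = u" using edge_out_of_subtree before j0 jk by simp
  then show ?thesis using jk j0 before by auto
qed

lemma parent_unique:
  assumes u: "u \<in> V" "u \<noteq> r"
  shows "\<exists>!p. p \<in> V \<and> p \<notin> subtree u \<and> E u p"
proof -
  obtain ps where ps: "is_path V E ps" "hd ps = r" "last ps = u" using connected root_in u by blast
  define n where "n = length ps"
  have n2: "n \<ge> 2" using is_path_length_ge_2[OF ps(1)] ps u unfolding n_def by simp
  have ne: "ps \<noteq> []" and dist: "distinct ps" using ps by (auto simp: is_path_def)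
  have last_u: "ps!(n-1) = u" using ps ne by (simp add: n_def last_conv_nth)
  define p where "p = ps!(n-2)"
  have pu: "E p u" using is_path_edge[OF ps(1), of "n-2"] last_u n2 unfolding p_def n_def
    by (simp add: Suc_diff_Suc numeral_2_eq_2)
  have pV: "p \<in> V" using is_path_nth_in[OF ps(1)] n2 unfolding p_def n_def by simp
  have p_out: "p \<notin> subtree u"
  proof
    assume "p \<in> subtree u"
    moreover have "ps!0 \<notin> subtree u" using ps ne root_notin_subtree[OF u(2)] by (simp add: hd_conv_nth)
    moreover have "n - 2 < length ps" using n2 unfolding n_def by simp
    ultimately obtain j where "0 < j" "j \<le> n - 2" "ps!j = u"
      using path_enters_subtree_at_root[OF ps(1)] unfolding p_def by blast
    moreover from this have "j < length ps" using n2 unfolding n_def by linarith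
    ultimately show False using distinct_nth_eq_last[OF dist, of j] ps(3) n2 unfolding n_def by auto
  qed
  have "b = p" if b: "b \<in> V" "b \<notin> subtree u" "E u b" for b
  proof (cases "b \<in> set ps")
    case False
    have "is_path V E (ps @ [b])" by (rule is_path_snoc) (use ps False b in auto)
    then have "last (ps @ [b]) \<in> subtree u" by (rule last_in_subtree) (use ps ne in auto)
    then show ?thesis using b by simp
  next
    case True
    then obtain i where i: "i < n" "ps!i = b" by (auto simp: in_set_conv_nth n_def)
    have "i \<noteq> n - 1" using i last_u b self_in_subtree by auto
    moreover have "\<not> i + 2 \<le> n - 1"
    proof
      assume "i + 2 \<le> n - 1"
      then have "\<not> E (ps!(n-1)) (ps!i)"
        by (rule tree_no_chord[OF tree ps(1)]) (use n2 in \<open>simp add: n_def\<close>)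
      then show False using last_u i b by simp
    qed
    ultimately have "i = n - 2" using i by linarith
    then show ?thesis using i p_def by simp
  qed
  then show ?thesis using pV p_out graph_edge_sym[OF graph pu] by blast
qed

definition parent :: "'a \<Rightarrow> 'a" where
  "parent u = (THE p. p \<in> V \<and> p \<notin> subtree u \<and> E u p)"

lemma parent:
  assumes "u \<in> V" "u \<noteq> r"
  shows "parent u \<in> V" "parent u \<notin> subtree u" "E u (parent u)" "E (parent u) u"
    and "\<And>b. b \<in> V \<Longrightarrow> b \<notin> subtree u \<Longrightarrow> E u b \<Longrightarrow> b = parent u"
proof -
  show p: "parent u \<in> V" "parent u \<notin> subtree u" "E u (parent u)"
    using theI'[OF parent_unique[OF assms]] unfolding parent_def by auto
  show "E (parent u) u" using graph_edge_sym[OF graph p(3)] .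
  show "\<And>b. b \<in> V \<Longrightarrow> b \<notin> subtree u \<Longrightarrow> E u b \<Longrightarrow> b = parent u"
    using parent_unique[OF assms] p by blast
qed

lemma path_exits_via_parent:
  assumes u: "u \<in> V" "u \<noteq> r" and p: "is_path V E xs"
    and h: "hd xs \<in> subtree u" and l: "last xs \<notin> subtree u"
  shows "\<exists>i. 0 < i \<and> i < length xs \<and> xs!(i-1) = u \<and> xs!i = parent u"
proof -
  have ne: "xs \<noteq> []" using p by (simp add: is_path_def)
  obtain i where i: "0 < i" "i \<le> length xs - 1" "xs!(i-1) = u" "xs!i \<notin> subtree u"
    using path_leaves_subtree_at_root[OF p, where k = "length xs - 1"] h l ne
    by (auto simp: hd_conv_nth last_conv_nth)
  moreover have "xs!i \<in> V" "E u (xs!i)"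
    using is_path_nth_in[OF p, of i] is_path_edge[OF p, of "i-1"] i ne by auto
  ultimately show ?thesis using parent(5)[OF u] ne by (intro exI[of _ i]) auto
qed

lemma path_enters_via_parent:
  assumes u: "u \<in> V" "u \<noteq> r" and p: "is_path V E xs"
    and h: "hd xs \<notin> subtree u" and l: "last xs \<in> subtree u"
  shows "\<exists>i. 0 < i \<and> i < length xs \<and> xs!(i-1) = parent u \<and> xs!i = u \<and> (\<forall>m<i. xs!m \<notin> subtree u)"
proof -
  have ne: "xs \<noteq> []" using p by (simp add: is_path_def)
  obtain i where i: "0 < i" "i \<le> length xs - 1" "xs!i = u" "\<forall>m<i. xs!m \<notin> subtree u"
    using path_enters_subtree_at_root[OF p, where k = "length xs - 1"] h l ne
    by (auto simp: hd_conv_nth last_conv_nth)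
  moreover have "xs!(i-1) \<in> V" "E u (xs!(i-1))"
    using is_path_nth_in[OF p, of "i-1"] is_path_edge[OF p, of "i-1"] i ne graph_edge_sym[OF graph]
    by auto
  ultimately show ?thesis using parent(5)[OF u] ne by (intro exI[of _ i]) auto
qed

text \<open>A path that left the subtree of \<open>u\<close> could only re-enter it through \<open>u\<close> again.\<close>

lemma path_stays_in_subtree:
  assumes p: "is_path V E xs" and i: "xs!i \<in> subtree u" and j: "xs!j \<in> subtree u" "j < length xs"
    and k: "i \<le> k" "k \<le> j"
  shows "xs!k \<in> subtree u"
proof (rule ccontr)
  assume out: "xs!k \<notin> subtree u"
  obtain m where m: "i \<le> m" "m < k" "xs!m \<in> subtree u" "xs!Suc m \<notin> subtree u"
    using ex_crossing_index[of "\<lambda>m. xs!m \<in> subtree u" i k] i out k by auto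
  obtain m' where m': "k \<le> m'" "m' < j" "xs!m' \<notin> subtree u" "xs!Suc m' \<in> subtree u"
    using ex_crossing_index[of "\<lambda>m. xs!m \<notin> subtree u" k j] j out k by auto
  have "xs!Suc m \<in> V" "E (xs!m) (xs!Suc m)"
    using is_path_nth_in[OF p] is_path_edge[OF p, of m] m k j by auto
  then have "xs!m = u" using edge_out_of_subtree m by blast
  moreover have "xs!m' \<in> V" "E (xs!m') (xs!Suc m')"
    using is_path_nth_in[OF p] is_path_edge[OF p, of m'] m' j by auto
  then have "xs!Suc m' = u" using edge_into_subtree m' by blast
  ultimately show False
    using p m m' j nth_eq_iff_index_eq[of xs m "Suc m'"] by (auto simp: is_path_def)
qed

lemma path_stays_outside_subtree:
  assumes u: "u \<in> V" "u \<noteq> r" and p: "is_path V E xs"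
    and i: "xs!i \<notin> subtree u" and j: "xs!j \<notin> subtree u" "j < length xs" and k: "i \<le> k" "k \<le> j"
  shows "xs!k \<notin> subtree u"
proof
  assume inside: "xs!k \<in> subtree u"
  obtain m where m: "i \<le> m" "m < k" "xs!m \<notin> subtree u" "xs!Suc m \<in> subtree u"
    using ex_crossing_index[of "\<lambda>m. xs!m \<notin> subtree u" i k] i inside k by auto
  obtain m' where m': "k \<le> m'" "m' < j" "xs!m' \<in> subtree u" "xs!Suc m' \<notin> subtree u"
    using ex_crossing_index[of "\<lambda>m. xs!m \<in> subtree u" k j] j inside k by auto
  have e: "E (xs!m) (xs!Suc m)" "E (xs!m') (xs!Suc m')"
    using is_path_edge[OF p] m m' k j by auto
  have V: "xs!m \<in> V" "xs!Suc m' \<in> V" using is_path_nth_in[OF p] m m' k j by auto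
  have "xs!Suc m = u" using edge_into_subtree V(1) m e(1) by blast
  then have "xs!m = parent u" using parent(5)[OF u V(1) m(3)] graph_edge_sym[OF graph e(1)] by simp
  moreover have "xs!m' = u" using edge_out_of_subtree V(2) m' e(2) by blast
  then have "xs!Suc m' = parent u" using parent(5)[OF u V(2) m'(4)] e(2) by simp
  ultimately show False
    using p m m' j nth_eq_iff_index_eq[of xs m "Suc m'"] by (auto simp: is_path_def)
qed

lemma sdist_path_restrict_subtree:
  assumes v: "sdist_path V E D x s xs" and x: "x \<in> subtree u" and s: "s \<in> subtree u"
    and D: "D \<inter> subtree u = S \<inter> subtree u"
  shows "sdist_path (subtree u) (restrict_edges E (subtree u)) (S \<inter> subtree u) x s xs"
proof -
  have p: "is_path V E xs" and h: "hd xs = x" and l: "last xs = s"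
    using v by (auto simp: sdist_path_def)
  have ne: "xs \<noteq> []" using p by (simp add: is_path_def)
  have sub: "set xs \<subseteq> subtree u"
  proof
    fix y assume "y \<in> set xs"
    then obtain k where "k < length xs" "xs!k = y" by (auto simp: in_set_conv_nth)
    then show "y \<in> subtree u"
      using path_stays_in_subtree[OF p, where i = 0 and j = "length xs - 1" and k = k] h l x s ne
      by (simp add: hd_conv_nth last_conv_nth)
  qed
  then have "{hd xs, last xs} \<subseteq> subtree u" "set (butlast (tl xs)) \<subseteq> subtree u"
    using ne interior_subset[of xs] by auto
  then have "{hd xs, last xs} \<inter> D = {hd xs, last xs} \<inter> (S \<inter> subtree u)"
    "set (butlast (tl xs)) \<inter> D = set (butlast (tl xs)) \<inter> (S \<inter> subtree u)"
    using D by auto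
  with v is_path_restrict[OF p sub] show ?thesis unfolding sdist_path_def by auto
qed

lemma root_path_outside_subtree:
  assumes ps: "is_path V E ps" "hd ps = r" "last ps = u"
  shows "set (butlast ps) \<inter> subtree u = {}"
proof (cases "u = r")
  case True
  then have "ps = [r]" using ps distinct_hd_eq_last[of ps] by (auto simp: is_path_def)
  then show ?thesis by simp
next
  case False
  show ?thesis
  proof (rule ccontr)
    assume "set (butlast ps) \<inter> subtree u \<noteq> {}"
    then obtain m where m: "m < length ps - 1" "ps!m \<in> subtree u"
      by (auto simp: in_set_conv_nth nth_butlast)
    have ne: "ps \<noteq> []" using ps by (auto simp: is_path_def)
    have "ps!0 \<notin> subtree u" using ps ne root_notin_subtree[OF False] by (simp add: hd_conv_nth)
    moreover have "m < length ps" using m by simp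
    ultimately obtain j where "j \<le> m" "ps!j = u"
      using path_enters_subtree_at_root[OF ps(1)] m(2) by blast
    moreover from this have "j < length ps" using m by linarith
    ultimately show False using distinct_nth_eq_last[of ps j] ps m by (auto simp: is_path_def)
  qed
qed

lemma last_in_subtree_of_member:
  assumes u: "u \<in> V" and zs: "is_path V E zs" "hd zs = u" "set zs \<subseteq> subtree u"
    and c: "c \<in> set zs"
  shows "last zs \<in> subtree c"
proof (cases "c = u \<or> tl zs = []")
  case True
  then have "c = u \<or> zs = [u]" using zs by (cases zs) (auto simp: is_path_def)
  moreover have "last zs \<in> subtree u" using zs by (auto simp: is_path_def)
  ultimately show ?thesis using self_in_subtree[of u] c by auto
next
  case False
  then have c_tl: "c \<in> set (tl zs)" and ne: "tl zs \<noteq> []" using c zs by (cases zs; auto)+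
  obtain ps where ps: "is_path V E ps" "hd ps = r" "last ps = u" using connected root_in u by blast
  have ps_ne: "ps \<noteq> []" using ps by (auto simp: is_path_def)
  have "set ps = set (butlast ps @ [last ps])" using ps_ne by simp
  then have "set ps = insert u (set (butlast ps))" using ps(3) by simp
  moreover have "u \<notin> set (tl zs)" using zs by (cases zs) (auto simp: is_path_def)
  moreover have "set (tl zs) \<subseteq> subtree u" using zs(3) by (cases zs) auto
  ultimately have disj: "set ps \<inter> set (tl zs) = {}" using root_path_outside_subtree[OF ps] by auto
  have "E (last ps) (hd (tl zs))" using is_path_edge[OF zs(1), of 0] ne zs(2) ps(3)
    by (cases zs; cases "tl zs") auto
  then have "is_path V E (ps @ tl zs)"
    using is_path_append[OF ps(1) is_path_drop[OF zs(1), of 1] _] disj ne by (cases zs) auto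
  moreover have "last (ps @ tl zs) = last zs" using ne by (cases zs) auto
  ultimately show ?thesis using last_in_subtree[of "ps @ tl zs" c] ps ps_ne c_tl by auto
qed

lemma subtree_of_descendant:
  assumes c: "c \<in> subtree u" "c \<noteq> u" and u: "u \<in> V"
  shows "subtree c \<subseteq> subtree u" "u \<notin> subtree c"
proof -
  have cV: "c \<in> V" using c subtree_subset[OF u] by auto
  show "subtree c \<subseteq> subtree u"
  proof
    fix y assume y: "y \<in> subtree c"
    show "y \<in> subtree u"
    proof (cases "y = c \<or> u = r")
      case True
      then show ?thesis using c y subtree_subset[OF cV] subtree_root by auto
    next
      case False
      then obtain ts where ts: "is_path V E ts" "hd ts = r" "last ts = y" "c \<in> set ts"
        using subtree_memD y by blast
      have ne: "ts \<noteq> []" using ts by (simp add: is_path_def)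
      obtain m where m: "m < length ts" "ts!m = c" using ts(4) by (auto simp: in_set_conv_nth)
      have "ts!0 \<notin> subtree u" using ts(2) ne root_notin_subtree False by (simp add: hd_conv_nth)
      then obtain j where "j \<le> m" "ts!j = u" using path_enters_subtree_at_root[OF ts(1)] m c by blast
      then have "u \<in> set ts" using m by (metis le_less_trans nth_mem)
      then show ?thesis using last_in_subtree[OF ts(1,2)] ts(3) by simp
    qed
  qed
  show "u \<notin> subtree c"
  proof
    assume uc: "u \<in> subtree c"
    show False
    proof (cases "u = r")
      case True
      then show False using uc root_notin_subtree[of c] c by auto
    next
      case False
      obtain ts where ts: "is_path V E ts" "hd ts = r" "last ts = u" "c \<in> set ts"
        using subtree_memD[OF uc] c by metis
      have ne: "ts \<noteq> []" using ts by (simp add: is_path_def)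
      obtain m where m: "m < length ts" "ts!m = c" using ts(4) by (auto simp: in_set_conv_nth)
      have "ts!0 \<notin> subtree u" using ts(2) ne root_notin_subtree False by (simp add: hd_conv_nth)
      then obtain j where j: "j \<le> m" "ts!j = u" using path_enters_subtree_at_root[OF ts(1)] m c by blast
      have "ts!(length ts - 1) = u" using ts(3) ne by (simp add: last_conv_nth)
      then have "j = length ts - 1"
        using ts(1) j m nth_eq_iff_index_eq[of ts j "length ts - 1"] by (auto simp: is_path_def)
      then show False using j m c by (metis diff_le_mono2 le_antisym less_imp_diff_less Suc_pred' ne
            length_greater_0_conv less_Suc_eq_le)
    qed
  qed
qed

lemma descendants_eq: "descendants V E r u = subtree u - {u}"
  unfolding subtree_verts_def descendants_def by auto

subsection \<open>Lower bounds for the weight\<close>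

lemma weight_ge_1_via_child:
  assumes finD: "finite D" and yD: "y \<in> D" and xD: "x \<notin> D"
    and zs: "is_path V E zs" "hd zs = y" "last zs = x"
    and shortest: "\<And>ys. is_path V E ys \<Longrightarrow> hd ys = y \<Longrightarrow> last ys = x \<Longrightarrow> length zs \<le> length ys"
    and x_sub: "x \<in> subtree (zs!1)" and y_sub: "y \<notin> subtree (zs!1)"
    and DS: "D \<inter> subtree (zs!1) = S \<inter> subtree (zs!1)"
    and dw: "dw V E S r (zs!1) \<le> 1"
    and interior: "set (butlast (tl zs)) \<inter> D = {}"
  shows "weight V E D x \<ge> 1"
proof -
  define c where "c = zs!1"
  define n where "n = length zs"
  define wc where "wc = weight (subtree c) (restrict_edges E (subtree c)) (S \<inter> subtree c) x"
  have zne: "zs \<noteq> []" using zs by (simp add: is_path_def)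
  have xy: "x \<noteq> y" using xD yD by auto
  have len_zs: "length zs \<ge> 2" using is_path_length_ge_2[OF zs(1)] zs xy by simp
  then have n2: "n \<ge> 2" unfolding n_def .
  have cV: "c \<in> V" using is_path_nth_in[OF zs(1), of 1] n2 unfolding n_def c_def by simp
  have sub_c: "subtree c \<subseteq> V" by (rule subtree_subset[OF cV])
  have "2 ^ (n - 2) * (1 - wc) \<le> dw V E S r c"
  proof -
    have "gdist V E c x = enat (n - 2)"
      unfolding c_def n_def by (rule gdist_second_vertex[OF graph zs]) (use shortest len_zs in auto)
    moreover have "finite (subtree c)" using finite_subset[OF sub_c finite_V] .
    ultimately show ?thesis
      unfolding dw_def Let_def wc_def using x_sub c_def
      by (intro Max_ge) (auto intro!: rev_image_eqI[where x = x])
  qed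
  with dw have w_c: "1 - wc \<le> 1 / 2 ^ (n - 2)" unfolding c_def by (simp add: field_simps)
  have "sdist_path V E D x y (rev zs)"
    using is_path_rev[OF graph zs(1)] zs zne xD yD xy interior interior_rev[of zs]
    by (auto simp: sdist_path_def hd_rev last_rev insert_commute)
  then have "half_pow (enat (n - 1)) \<le> half_pow (sdist V E D x y)"
    using sdist_le_length half_pow_antimono unfolding n_def by fastforce
  moreover have "half_pow (enat (n - 1)) = 1 / 2 ^ (n - 2)"
  proof -
    have "n - 1 = Suc (n - 2)" using n2 by simp
    then show ?thesis by (simp add: half_pow_enat)
  qed
  ultimately have w_y: "1 / 2 ^ (n - 2) \<le> half_pow (sdist V E D x y)" by simp
  have w_S: "wc \<le> (\<Sum>s\<in>S \<inter> subtree c. half_pow (sdist V E D x s))"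
    unfolding wc_def weight_def
    by (rule sum_mono, rule half_pow_antimono, rule sdist_le_sdist_restrict[OF sub_c])
      (use DS in \<open>simp add: c_def\<close>)
  have "half_pow (sdist V E D x y) + (\<Sum>s\<in>S \<inter> subtree c. half_pow (sdist V E D x s))
      = (\<Sum>s\<in>insert y (S \<inter> subtree c). half_pow (sdist V E D x s))"
    using y_sub finite_subset[OF sub_c finite_V] unfolding c_def by simp
  also have "\<dots> \<le> weight V E D x"
    unfolding weight_def
    by (rule sum_mono2[OF finD]) (use DS yD half_pow_nonneg in \<open>auto simp: c_def\<close>)
  finally show ?thesis using w_c w_y w_S by linarith
qed

lemma weight_ge_1_in_subtree:
  assumes u: "u \<in> V" and uD: "u \<in> D" and finD: "finite D"
    and x: "x \<in> subtree u" and xD: "x \<notin> D"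
    and DS: "D \<inter> descendants V E r u = S \<inter> descendants V E r u"
    and leaves: "S \<subseteq> {v\<in>V. degree V E v \<le> 1}"
    and dw: "\<forall>v\<in>descendants V E r u. dw V E S r v \<le> 1"
  shows "weight V E D x \<ge> 1"
proof -
  have xV: "x \<in> V" using x subtree_subset[OF u] by auto
  obtain xs where "is_path V E xs" "hd xs = u" "last xs = x" using connected[OF u xV] by blast
  then obtain zs where zs: "is_path V E zs" "hd zs = u" "last zs = x"
    and shortest: "\<And>ys. is_path V E ys \<Longrightarrow> hd ys = u \<Longrightarrow> last ys = x \<Longrightarrow> length zs \<le> length ys"
    by (rule shortest_path_exists) (rule that)
  have zne: "zs \<noteq> []" and dist: "distinct zs" using zs by (auto simp: is_path_def)
  have "u \<noteq> x" using uD xD by auto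
  then have n2: "length zs \<ge> 2" using is_path_length_ge_2[OF zs(1)] zs by simp
  have zs_sub: "set zs \<subseteq> subtree u"
  proof
    fix v assume "v \<in> set zs"
    then obtain k where "k < length zs" "zs!k = v" by (auto simp: in_set_conv_nth)
    then show "v \<in> subtree u"
      using path_stays_in_subtree[OF zs(1), where i = 0 and j = "length zs - 1" and k = k]
        zs zne x self_in_subtree by (simp add: hd_conv_nth last_conv_nth)
  qed
  define c where "c = zs!1"
  have c_in: "c \<in> set zs" using n2 unfolding c_def by simp
  have "c \<noteq> u" using dist zs(2) zne n2 nth_eq_iff_index_eq[of zs 1 0] unfolding c_def
    by (simp add: hd_conv_nth)
  then have c_desc: "subtree c \<subseteq> descendants V E r u" "u \<notin> subtree c"
    using subtree_of_descendant[OF _ _ u] c_in zs_sub unfolding descendants_eq by auto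
  have interior: "set (butlast (tl zs)) \<inter> D = {}"
  proof -
    have "set (butlast (tl zs)) \<subseteq> descendants V E r u"
      using zs_sub interior_subset[of zs] interior_hd_notin[OF dist] zs(2)
      unfolding descendants_eq by auto
    then show ?thesis using leaves_not_interior[OF graph zs(1) leaves] DS by auto
  qed
  show ?thesis
  proof (rule weight_ge_1_via_child[OF finD uD xD zs shortest])
    show "x \<in> subtree (zs!1)"
      using last_in_subtree_of_member[OF u zs(1,2) zs_sub c_in] zs(3) unfolding c_def by simp
    show "D \<inter> subtree (zs!1) = S \<inter> subtree (zs!1)" using c_desc DS unfolding c_def by auto
    show "dw V E S r (zs!1) \<le> 1"
      using dw c_in zs_sub \<open>c \<noteq> u\<close> unfolding c_def descendants_eq by auto
  qed (use c_desc interior in \<open>simp_all add: c_def\<close>)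
qed

subsection \<open>Contributions across the edge between a subtree and its parent\<close>

lemma weight_outside_subtree_le:
  assumes u: "u \<in> V" "u \<noteq> r" and deg: "\<forall>a\<in>V. degree V E a \<le> 3"
    and v: "v \<in> subtree u" and finD: "finite D"
  shows "(\<Sum>s\<in>D - subtree u. half_pow (sdist V E D v s)) \<le> (1/2) ^ the_enat (gdist V E u v)"
proof -
  define k where "k = the_enat (gdist V E u v)"
  define X where "X = {s\<in>D - subtree u. sdist V E D v s \<noteq> \<infinity>}"
  have finX: "finite X" using finD unfolding X_def by auto
  obtain P where P: "\<And>s. s \<in> X \<Longrightarrow> sdist_path V E D v s (P s)"
    and len: "\<And>s. s \<in> X \<Longrightarrow> sdist V E D v s = enat (length (P s) - 1)"
    using shortest_sdist_paths[of X V E D v] unfolding X_def by blast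
  have exit_index: "\<forall>s\<in>X. \<exists>i. 0 < i \<and> i < length (P s) \<and> P s!(i-1) = u \<and> P s!i = parent u"
  proof
    fix s assume s: "s \<in> X"
    then show "\<exists>i. 0 < i \<and> i < length (P s) \<and> P s!(i-1) = u \<and> P s!i = parent u"
      using path_exits_via_parent[OF u, of "P s"] P[OF s] v by (auto simp: sdist_path_def X_def)
  qed
  obtain I where I: "\<And>s. s \<in> X \<Longrightarrow> 0 < I s \<and> I s < length (P s) \<and> P s!(I s - 1) = u \<and> P s!I s = parent u"
    using bchoice[OF exit_index] by blast
  have bound: "half_pow (sdist V E D v s) \<le> (1/2)^k * (1/2)^(length (P s) - Suc (I s))" if s: "s \<in> X" for s
  proof -
    have p: "is_path V E (P s)" "hd (P s) = v" using P[OF s] by (auto simp: sdist_path_def)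
    obtain j where j: "I s = Suc j" using I[OF s] by (cases "I s") auto
    have "is_path V E (rev (take (Suc j) (P s)))" using is_path_rev[OF graph is_path_take[OF p(1)]] by simp
    moreover have "hd (rev (take (Suc j) (P s))) = u"
      using I[OF s] j by (simp add: hd_rev take_Suc_conv_app_nth)
    moreover have "last (rev (take (Suc j) (P s))) = v" using p by (cases "P s") (auto simp: last_rev is_path_def)
    ultimately have "gdist V E u v \<le> enat (length (rev (take (Suc j) (P s))) - 1)"
      by (rule gdist_le_length)
    then have "k \<le> j" using j unfolding k_def by (cases "gdist V E u v") auto
    have "length (P s) - 1 = I s + (length (P s) - Suc (I s))"
      using I[OF s] by (auto simp del: diff_Suc_1)
    then have "half_pow (sdist V E D v s) = 2 * (1/2)^(I s) * (1/2)^(length (P s) - Suc (I s))"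
      unfolding len[OF s] by (simp only: half_pow_enat_add)
    also have "\<dots> = (1/2)^j * (1/2)^(length (P s) - Suc (I s))" using j by simp
    also have "\<dots> \<le> (1/2)^k * (1/2)^(length (P s) - Suc (I s))"
      using \<open>k \<le> j\<close> by (intro mult_right_mono power_decreasing) auto
    finally show ?thesis .
  qed
  have "(\<Sum>s\<in>D - subtree u. half_pow (sdist V E D v s)) = (\<Sum>s\<in>X. half_pow (sdist V E D v s))"
    using sum_half_pow_sdist_finite[of "D - subtree u"] finD unfolding X_def by simp
  also have "\<dots> \<le> (\<Sum>s\<in>X. (1/2)^k * (1/2::real)^(length (P s) - Suc (I s)))"
    by (rule sum_mono) (rule bound)
  also have "\<dots> = (1/2)^k * (\<Sum>s\<in>X. (1/2::real)^(length (P s) - Suc (I s)))"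
    by (simp add: sum_distrib_left)
  also have "\<dots> \<le> (1/2)^k"
  proof -
    have "X \<subseteq> D" unfolding X_def by auto
    from kraft_sdist_path_tails[OF graph deg finX this parent(3)[OF u] P I] show ?thesis by simp
  qed
  finally show ?thesis unfolding k_def .
qed

lemma dw_gt_1_differs_on_subtree:
  assumes u: "u \<in> V" "u \<noteq> r" and deg: "\<forall>a\<in>V. degree V E a \<le> 3"
    and finD: "finite D" and ed: "exp_dom V E D" and gt: "dw V E S r u > 1"
  shows "D \<inter> subtree u \<noteq> S \<inter> subtree u"
proof
  assume DS: "D \<inter> subtree u = S \<inter> subtree u"
  define f where "f v = 2 ^ the_enat (gdist V E u v) *
    (1 - weight (subtree u) (restrict_edges E (subtree u)) (S \<inter> subtree u) v)" for v
  have fin: "finite (subtree u)" using finite_subset[OF subtree_subset[OF u(1)] finite_V] .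
  have "dw V E S r u = Max (f ` subtree u)" unfolding dw_def Let_def f_def by simp
  moreover have "Max (f ` subtree u) \<in> f ` subtree u" using fin self_in_subtree by (intro Max_in) auto
  ultimately obtain v where v: "v \<in> subtree u" and fv: "f v > 1" using gt by auto
  define k where "k = the_enat (gdist V E u v)"
  define w where "w = weight (subtree u) (restrict_edges E (subtree u)) (S \<inter> subtree u) v"
  have "1 < 2 ^ k * (1 - w)" using fv unfolding f_def k_def w_def by simp
  then have w_lt: "(1/2)^k < 1 - w" by (simp add: power_one_over pos_divide_less_eq mult.commute)
  have "(\<Sum>s\<in>D \<inter> subtree u. half_pow (sdist V E D v s)) \<le> w"
    unfolding w_def weight_def DS
  proof (rule sum_mono, rule half_pow_antimono)
    fix s assume "s \<in> S \<inter> subtree u"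
    then show "sdist (subtree u) (restrict_edges E (subtree u)) (S \<inter> subtree u) v s \<le> sdist V E D v s"
      unfolding sdist_eq_INF using sdist_path_restrict_subtree[OF _ v _ DS]
      by (intro INF_superset_mono) auto
  qed
  moreover have "(\<Sum>s\<in>D - subtree u. half_pow (sdist V E D v s)) \<le> (1/2)^k"
    unfolding k_def by (rule weight_outside_subtree_le[OF u deg v finD])
  moreover have "weight V E D v = (\<Sum>s\<in>D \<inter> subtree u. half_pow (sdist V E D v s)) +
      (\<Sum>s\<in>D - subtree u. half_pow (sdist V E D v s))"
    unfolding weight_def by (rule sum.Int_Diff[OF finD])
  moreover have "weight V E D v \<ge> 1" using ed v subtree_subset[OF u(1)] by (auto simp: exp_dom_def)
  ultimately show False using w_lt by linarith
qed

lemma sdist_outside_subtree_le: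
  assumes u: "u \<in> V" "u \<noteq> r" and x: "x \<notin> subtree u" and s: "s \<notin> subtree u"
    and D: "D' - subtree u = D - subtree u"
  shows "sdist V E D' x s \<le> sdist V E D x s"
  unfolding sdist_eq_INF
proof (rule INF_superset_mono)
  show "{xs. sdist_path V E D x s xs} \<subseteq> {xs. sdist_path V E D' x s xs}"
  proof
    fix xs assume "xs \<in> {xs. sdist_path V E D x s xs}"
    then have xs: "sdist_path V E D x s xs" by simp
    then have p: "is_path V E xs" "hd xs = x" "last xs = s" by (auto simp: sdist_path_def)
    have ne: "xs \<noteq> []" using p by (simp add: is_path_def)
    have out: "set xs \<inter> subtree u = {}"
    proof (rule ccontr)
      assume "set xs \<inter> subtree u \<noteq> {}"
      then obtain k where "k < length xs" "xs!k \<in> subtree u" by (auto simp: in_set_conv_nth)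
      moreover from this have "k \<le> length xs - 1" by simp
      ultimately show False
        using path_stays_outside_subtree[OF u p(1), where i = 0 and j = "length xs - 1" and k = k]
          p x s ne by (simp add: hd_conv_nth last_conv_nth)
    qed
    then have "{hd xs, last xs} \<inter> D' = {hd xs, last xs} \<inter> D"
      "set (butlast (tl xs)) \<inter> D' = set (butlast (tl xs)) \<inter> D"
      using hd_in_set[OF ne] last_in_set[OF ne] interior_subset[of xs] D by blast+
    with xs show "xs \<in> {xs. sdist_path V E D' x s xs}" unfolding sdist_path_def by (elim conjE) simp
  qed
qed simp

lemma sdist_le_entry_index:
  assumes xs: "sdist_path V E D x s xs"
    and i: "i < length xs" "xs!i = u" "\<forall>m<i. xs!m \<notin> subtree u"
    and uD': "u \<in> D'" and xD': "x \<notin> D'" and D': "D' - subtree u = D - subtree u"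
  shows "sdist V E D' x u \<le> enat i"
proof -
  define A where "A = take (Suc i) xs"
  have p: "is_path V E xs" "hd xs = x" using xs by (auto simp: sdist_path_def)
  have ne: "xs \<noteq> []" using p by (simp add: is_path_def)
  have A: "is_path V E A" "hd A = x" "last A = u" "length A = Suc i"
  proof -
    show "is_path V E A" unfolding A_def using is_path_take[OF p(1)] by simp
    show "hd A = x" unfolding A_def using p ne by (cases xs) auto
    show "last A = u" "length A = Suc i" unfolding A_def using i by (auto simp: take_Suc_conv_app_nth)
  qed
  have "y \<in> set (butlast (tl xs)) \<and> y \<notin> subtree u" if y: "y \<in> set (butlast (tl A))" for y
  proof -
    obtain j where j: "0 < j" "Suc j < length A" "A!j = y" using interior_nth[OF y] by blast
    then have "j < i" "A!j = xs!j" using A(4) unfolding A_def by auto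
    then show ?thesis using nth_in_interior[of j xs] i j by auto
  qed
  then have "set (butlast (tl A)) \<inter> D' = {}" using xs D' by (auto simp: sdist_path_def)
  then have "sdist_path V E D' x u A" using A uD' xD' by (auto simp: sdist_path_def)
  then show ?thesis using sdist_le_length A(4) by fastforce
qed

lemma weight_inside_subtree_le:
  assumes u: "u \<in> V" "u \<noteq> r" and deg: "\<forall>a\<in>V. degree V E a \<le> 3"
    and x: "x \<notin> subtree u" and finD: "finite D"
    and uD': "u \<in> D'" and xD': "x \<notin> D'" and D': "D' - subtree u = D - subtree u"
  shows "(\<Sum>s\<in>D \<inter> subtree u. half_pow (sdist V E D x s)) \<le> half_pow (sdist V E D' x u)"
proof -
  define X where "X = {s\<in>D \<inter> subtree u. sdist V E D x s \<noteq> \<infinity>}"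
  have finX: "finite X" using finD unfolding X_def by auto
  obtain P where P: "\<And>s. s \<in> X \<Longrightarrow> sdist_path V E D x s (P s)"
    and len: "\<And>s. s \<in> X \<Longrightarrow> sdist V E D x s = enat (length (P s) - 1)"
    using shortest_sdist_paths[of X V E D x] unfolding X_def by blast
  have entry_index: "\<forall>s\<in>X. \<exists>i. 0 < i \<and> i < length (P s) \<and> P s!(i-1) = parent u \<and> P s!i = u \<and>
      (\<forall>m<i. P s!m \<notin> subtree u)"
  proof
    fix s assume s: "s \<in> X"
    then show "\<exists>i. 0 < i \<and> i < length (P s) \<and> P s!(i-1) = parent u \<and> P s!i = u \<and>
        (\<forall>m<i. P s!m \<notin> subtree u)"
      using path_enters_via_parent[OF u, of "P s"] P[OF s] x by (auto simp: sdist_path_def X_def)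
  qed
  obtain I where I: "\<And>s. s \<in> X \<Longrightarrow> 0 < I s \<and> I s < length (P s) \<and> P s!(I s - 1) = parent u \<and>
      P s!I s = u \<and> (\<forall>m<I s. P s!m \<notin> subtree u)"
    using bchoice[OF entry_index] by blast
  have to_u: "sdist V E D' x u \<le> enat (I s)" if s: "s \<in> X" for s
    using sdist_le_entry_index[OF P[OF s] _ _ _ uD' xD' D'] I[OF s] by auto
  show ?thesis
  proof (cases "X = {}")
    case True
    then show ?thesis
      using sum_half_pow_sdist_finite[of "D \<inter> subtree u"] finD half_pow_nonneg unfolding X_def by simp
  next
    case False
    then obtain m where m: "sdist V E D' x u = enat m" using to_u by (cases "sdist V E D' x u") auto
    have bound: "half_pow (sdist V E D x s) \<le> 2 * (1/2)^m * (1/2)^(length (P s) - Suc (I s))"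
      if s: "s \<in> X" for s
    proof -
      have "m \<le> I s" using to_u[OF s] m by simp
      have "length (P s) - 1 = I s + (length (P s) - Suc (I s))"
        using I[OF s] by (auto simp del: diff_Suc_1)
      then have "half_pow (sdist V E D x s) = 2 * (1/2)^(I s) * (1/2)^(length (P s) - Suc (I s))"
        unfolding len[OF s] by (simp only: half_pow_enat_add)
      also have "\<dots> \<le> 2 * (1/2)^m * (1/2)^(length (P s) - Suc (I s))"
        using \<open>m \<le> I s\<close> by (intro mult_right_mono mult_left_mono power_decreasing) auto
      finally show ?thesis .
    qed
    have "(\<Sum>s\<in>D \<inter> subtree u. half_pow (sdist V E D x s)) = (\<Sum>s\<in>X. half_pow (sdist V E D x s))"
      using sum_half_pow_sdist_finite[of "D \<inter> subtree u"] finD unfolding X_def by simp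
    also have "\<dots> \<le> (\<Sum>s\<in>X. 2 * (1/2)^m * (1/2::real)^(length (P s) - Suc (I s)))"
      by (rule sum_mono) (rule bound)
    also have "\<dots> = 2 * (1/2)^m * (\<Sum>s\<in>X. (1/2::real)^(length (P s) - Suc (I s)))"
      by (simp add: sum_distrib_left)
      also have "\<dots> \<le> 2 * (1/2)^m"
    proof -
      have "X \<subseteq> D" unfolding X_def by auto
      from kraft_sdist_path_tails[OF graph deg finX this parent(4)[OF u] P, of I] I show ?thesis by simp
    qed
    also have "\<dots> = half_pow (sdist V E D' x u)" using m by (simp add: half_pow_enat power_one_over)
    finally show ?thesis .
  qed
qed

lemma exp_dom_replace_in_subtree:
  assumes u: "u \<in> V" "u \<noteq> r" and deg: "\<forall>a\<in>V. degree V E a \<le> 3"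
    and leaves: "S \<subseteq> {v\<in>V. degree V E v \<le> 1}" and SD: "S \<subseteq> D" and ed: "exp_dom V E D"
    and dw: "\<forall>v\<in>descendants V E r u. dw V E S r v \<le> 1"
  shows "exp_dom V E ((D - subtree u) \<union> (S \<inter> subtree u) \<union> {u})"
proof -
  define D' where "D' = (D - subtree u) \<union> (S \<inter> subtree u) \<union> {u}"
  have DV: "D \<subseteq> V" using ed by (simp add: exp_dom_def)
  have finD: "finite D" using finite_subset[OF DV finite_V] .
  have D'V: "D' \<subseteq> V" unfolding D'_def using DV SD u by auto
  have finD': "finite D'" using finite_subset[OF D'V finite_V] .
  have uD': "u \<in> D'" unfolding D'_def by simp
  have D'_out: "D' - subtree u = D - subtree u" unfolding D'_def using self_in_subtree by auto
  have "weight V E D' x \<ge> 1" if x: "x \<in> V" for x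
  proof (cases "x \<in> D'")
    case True
    then show ?thesis using weight_ge_2_in_set[OF finD' True x, of E] by simp
  next
    case xD': False
    show ?thesis
    proof (cases "x \<in> subtree u")
      case True
      have "D' \<inter> descendants V E r u = S \<inter> descendants V E r u"
        unfolding D'_def descendants_eq by auto
      then show ?thesis using weight_ge_1_in_subtree[OF u(1) uD' finD' True xD' _ leaves dw] by simp
    next
      case False
      have "1 \<le> weight V E D x" using ed x by (simp add: exp_dom_def)
      also have "\<dots> = (\<Sum>s\<in>D \<inter> subtree u. half_pow (sdist V E D x s)) +
          (\<Sum>s\<in>D - subtree u. half_pow (sdist V E D x s))"
        unfolding weight_def by (rule sum.Int_Diff[OF finD])
      also have "\<dots> \<le> half_pow (sdist V E D' x u) + (\<Sum>s\<in>D - subtree u. half_pow (sdist V E D' x s))"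
      proof (rule add_mono)
        show "(\<Sum>s\<in>D \<inter> subtree u. half_pow (sdist V E D x s)) \<le> half_pow (sdist V E D' x u)"
          by (rule weight_inside_subtree_le[OF u deg False finD uD' xD' D'_out])
        show "(\<Sum>s\<in>D - subtree u. half_pow (sdist V E D x s)) \<le>
            (\<Sum>s\<in>D - subtree u. half_pow (sdist V E D' x s))"
          by (intro sum_mono half_pow_antimono sdist_outside_subtree_le[OF u False _ D'_out]) auto
      qed
      also have "\<dots> = (\<Sum>s\<in>insert u (D - subtree u). half_pow (sdist V E D' x s))"
        using finD self_in_subtree[of u] by simp
      also have "\<dots> \<le> weight V E D' x"
        unfolding weight_def
        by (rule sum_mono2[OF finD']) (use uD' D'_out half_pow_nonneg in auto)
      finally show ?thesis .
    qed
  qed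
  then show ?thesis unfolding exp_dom_def D'_def[symmetric] using D'V by simp
qed

lemma min_exp_dom_extend_by_subtree_root:
  assumes deg: "\<forall>a\<in>V. degree V E a \<le> 3" and leaves: "S \<subseteq> {v\<in>V. degree V E v \<le> 1}"
    and D: "min_exp_dom V E D" "S \<subseteq> D"
    and u: "u \<in> V" "u \<noteq> r" and gt: "dw V E S r u > 1"
    and dw: "\<forall>v\<in>descendants V E r u. dw V E S r v \<le> 1"
  shows "min_exp_dom V E ((D - subtree u) \<union> (S \<inter> subtree u) \<union> {u})"
proof -
  define D' where "D' = (D - subtree u) \<union> (S \<inter> subtree u) \<union> {u}"
  have ed: "exp_dom V E D" using D by (simp add: min_exp_dom_def)
  have finD: "finite D" using ed finite_subset[OF _ finite_V] by (auto simp: exp_dom_def)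
  have "exp_dom V E D'" unfolding D'_def by (rule exp_dom_replace_in_subtree[OF u deg leaves D(2) ed dw])
  moreover have "card D' \<le> card D"
  proof -
    have "D \<inter> subtree u \<noteq> S \<inter> subtree u" by (rule dw_gt_1_differs_on_subtree[OF u deg finD ed gt])
    then obtain z where z: "z \<in> D" "z \<in> subtree u" "z \<notin> S" using D(2) by auto
    then have "D' \<subseteq> insert u (D - {z})" unfolding D'_def using D(2) by auto
    then have "card D' \<le> card (insert u (D - {z}))" by (rule card_mono[rotated]) (use finD in simp)
    also have "\<dots> \<le> Suc (card (D - {z}))" using finD by (simp add: card_insert_if)
    also have "\<dots> = card D" by (rule card_Suc_Diff1[OF finD z(1)])
    finally show ?thesis .
  qed
  ultimately show ?thesis using D(1) unfolding D'_def min_exp_dom_def by auto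
qed

lemma min_exp_dom_insert_root:
  assumes leaves: "S \<subseteq> {v\<in>V. degree V E v \<le> 1}" and not_dom: "\<not> exp_dom V E S"
    and D: "min_exp_dom V E D" "S \<subseteq> D" and r: "r \<notin> S"
    and dw: "\<forall>u\<in>V. dw V E S r u \<le> 1"
  shows "min_exp_dom V E (S \<union> {r})"
proof -
  have finS: "finite S" using leaves finite_subset[OF _ finite_V] by auto
  have "exp_dom V E (S \<union> {r})"
    unfolding exp_dom_def
  proof (intro conjI ballI)
    show "S \<union> {r} \<subseteq> V" using leaves root_in by auto
    fix x assume x: "x \<in> V"
    show "1 \<le> weight V E (S \<union> {r}) x"
    proof (cases "x \<in> S \<union> {r}")
      case True
      then show ?thesis using weight_ge_2_in_set[of "S \<union> {r}" x V E] finS x by simp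
    next
      case False
      show ?thesis
      proof (rule weight_ge_1_in_subtree[OF root_in _ _ _ False _ leaves])
        show "r \<in> S \<union> {r}" "finite (S \<union> {r})" using finS by auto
        show "x \<in> subtree r" using x subtree_root by simp
        show "(S \<union> {r}) \<inter> descendants V E r r = S \<inter> descendants V E r r"
          unfolding descendants_eq by auto
        show "\<forall>v\<in>descendants V E r r. dw V E S r v \<le> 1"
          using dw unfolding descendants_eq subtree_root by auto
      qed
    qed
  qed
  moreover have "card (S \<union> {r}) \<le> card D"
  proof -
    have finD: "finite D" using D finite_subset[OF _ finite_V] by (auto simp: min_exp_dom_def exp_dom_def)
    have "S \<noteq> D" using D not_dom by (auto simp: min_exp_dom_def)
    then have "card S < card D" using D(2) by (intro psubset_card_mono[OF finD]) auto
    then show ?thesis using r finS by simp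
  qed
  ultimately show ?thesis using D(1) unfolding min_exp_dom_def by auto
qed

end

theorem lemma3:
  fixes V :: "'a set" and E :: "'a \<Rightarrow> 'a \<Rightarrow> bool" and S :: "'a set" and r :: 'a
  assumes "tree V E"
    and "\<forall>u\<in>V. degree V E u \<le> 3"
    and "S \<subseteq> {u\<in>V. degree V E u \<le> 1}"
    and "\<not> exp_dom V E S"
    and "\<exists>D. min_exp_dom V E D \<and> S \<subseteq> D"
    and "r \<in> V - S"
  shows "(\<forall>u\<in>V. u \<noteq> r \<longrightarrow> dw V E S r u > 1 \<longrightarrow>
            (\<forall>v\<in>descendants V E r u. dw V E S r v \<le> 1) \<longrightarrow>
            (\<exists>D. min_exp_dom V E D \<and> S \<union> {u} \<subseteq> D))
       \<and> ((\<forall>u\<in>V. dw V E S r u \<le> 1) \<longrightarrow> min_exp_dom V E (S \<union> {r}))"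
proof -
  interpret rooted_tree V E r using assms(1,6) by unfold_locales auto
  obtain D where D: "min_exp_dom V E D" "S \<subseteq> D" using assms(5) by blast
  show ?thesis
  proof (intro conjI ballI impI)
    fix u assume u: "u \<in> V" "u \<noteq> r" and gt: "dw V E S r u > 1"
      and dw: "\<forall>v\<in>descendants V E r u. dw V E S r v \<le> 1"
    have "min_exp_dom V E ((D - subtree u) \<union> (S \<inter> subtree u) \<union> {u})"
      by (rule min_exp_dom_extend_by_subtree_root[OF assms(2,3) D u gt dw])
    moreover have "S \<union> {u} \<subseteq> (D - subtree u) \<union> (S \<inter> subtree u) \<union> {u}" using D(2) by auto
    ultimately show "\<exists>D. min_exp_dom V E D \<and> S \<union> {u} \<subseteq> D" by blast
  next
    assume "\<forall>u\<in>V. dw V E S r u \<le> 1"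
    then show "min_exp_dom V E (S \<union> {r})"
      using min_exp_dom_insert_root[OF assms(3,4) D] assms(6) by simp
  qed
qed

end
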